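(* Let $A\in\mathbb{R}^{n\times n}$, ${\mathbf w}\in\mathbb{R}^n$, $T>0$, and let $D$ be a linear differential operator in the time variable $t$ (for instance $\frac{\mathrm d}{\mathrm dt}$ or $\frac{\mathrm d^2}{\mathrm dt^2}$), acting componentwise on vector-valued functions. Let $\mathcal{V}_1\subseteq\mathcal{V}_2\subseteq\dots\subseteq\mathcal{V}_m\subseteq\mathcal{V}_{m+1}\subseteq\mathbb{R}^n$ be nested subspaces with $d_i=\dim(\mathcal{V}_i)$ (and $d_0=0$), such that ${\mathbf w}\in\mathcal{V}_1$ and $A\mathcal{V}_i\subseteq\mathcal{V}_{i+1}$ for all $i=1,\dots,m$. Let $\langle\cdot,\cdot\rangle_\ast$ be an inner product on $\mathcal{V}_{m+1}$, and let $U_{m+1}=[\mathcal{U}_1,\dots,\mathcal{U}_{m+1}]$, with $\mathcal{U}_j\in\mathbb{R}^{n\times b_j}$, $b_j=d_j-d_{j-1}$, be a nested basis of $\mathcal{V}_{m+1}$ that is orthonormal with respect to $\langle\cdot,\cdot\rangle_\ast$, i.e. $U_i=[\mathcal{U}_1,\dots,\mathcal{U}_i]$ has columns forming a $\langle\cdot,\cdot\rangle_\ast$-orthonormal basis of $\mathcal{V}_i$ for each $i\le m+1$. Let ${\mathbf y}_m:[0,T]\to\mathcal{V}_m$ be a (sufficiently differentiable) function whose residual \[ {\mathbf r}_m(t) := -D{\mathbf y}_m(t) - A{\mathbf y}_m(t) + {\mathbf w} \] satisfies the Galerkin condition $\langle {\mathbf v},{\mathbf r}_m(t)\rangle_\ast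 = 0$ for all ${\mathbf v}\in\mathcal{V}_m$ and all $t\in[0,T]$. Write ${\mathbf y}_m(t)=U_m{\mathbf x}_m(t)$ with ${\mathbf x}_m:[0,T]\to\mathbb{R}^{d_m}$. Then for all $t\in[0,T]$, \[ {\mathbf r}_m(t) = \mathcal{U}_{m+1}\boldsymbol{\beta}_m(t)\quad\text{with}\quad \boldsymbol{\beta}_m(t) = -\,\mathcal{U}_{m+1}^\ast A\,\mathcal{U}_m\,[{\mathbf x}_m(t)]_{d_{m-1}+1:d_m}. \]
   Context: For a matrix $W=[{\mathbf w}_1,\dots,{\mathbf w}_k]$ whose columns lie in $\mathcal{V}_{m+1}$, the adjoint $W^\ast$ with respect to $\langle\cdot,\cdot\rangle_\ast$ is the map sending ${\mathbf x}\in\mathcal{V}_{m+1}$ to the vector $(\langle{\mathbf w}_1,{\mathbf x}\rangle_\ast,\dots,\langle{\mathbf w}_k,{\mathbf x}\rangle_\ast)^{\top}\in\mathbb{R}^k$; thus $\mathcal{U}_{m+1}^\ast A\,\mathcal{U}_m$ is the $b_{m+1}\times b_m$ matrix with entries $\langle {\mathbf u}, A{\mathbf u}'\rangle_\ast$ for columns ${\mathbf u}$ of $\mathcal{U}_{m+1}$ and ${\mathbf u}'$ of $\mathcal{U}_m$ (well defined since $A\mathcal{V}_m\subseteq\mathcal{V}_{m+1}$). For a vector ${\mathbf v}$, $[{\mathbf v}]_{i:j}$ denotes the subvector of entries $i,i+1,\dots,j$. *)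

theory Defs
  imports "HOL-Analysis.Analysis"
begin

definition inner_product_on :: "('a::real_vector) set \<Rightarrow> ('a \<Rightarrow> 'a \<Rightarrow> real) \<Rightarrow> bool" where
  "inner_product_on V ip \<longleftrightarrow>
     (\<forall>x\<in>V. \<forall>y\<in>V. ip x y = ip y x) \<and>
     (\<forall>x\<in>V. \<forall>y\<in>V. \<forall>z\<in>V. ip (x + y) z = ip x z + ip y z) \<and>
     (\<forall>x\<in>V. \<forall>y\<in>V. \<forall>c. ip (c *\<^sub>R x) y = c * ip x y) \<and>
     (\<forall>x\<in>V. 0 \<le> ip x x) \<and>
     (\<forall>x\<in>V. ip x x = 0 \<longleftrightarrow> x = 0)"

definition lin_time_op :: "real \<Rightarrow> (real \<Rightarrow> real) set \<Rightarrow> ((real \<Rightarrow> real) \<Rightarrow> (real \<Rightarrow> real)) \<Rightarrow> bool" where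
  "lin_time_op T S Dop \<longleftrightarrow>
     (\<lambda>t. 0) \<in> S \<and>
     (\<forall>f\<in>S. \<forall>g\<in>S. (\<lambda>t. f t + g t) \<in> S) \<and>
     (\<forall>f\<in>S. \<forall>c. (\<lambda>t. c * f t) \<in> S) \<and>
     (\<forall>f\<in>S. \<forall>g\<in>S. \<forall>t\<in>{0..T}. Dop (\<lambda>s. f s + g s) t = Dop f t + Dop g t) \<and>
     (\<forall>f\<in>S. \<forall>c. \<forall>t\<in>{0..T}. Dop (\<lambda>s. c * f s) t = c * Dop f t) \<and>
     (\<forall>f g. (\<forall>s\<in>{0..T}. f s = g s) \<longrightarrow> (\<forall>t\<in>{0..T}. Dop f t = Dop g t))"

definition compD :: "((real \<Rightarrow> real) \<Rightarrow> (real \<Rightarrow> real)) \<Rightarrow> (real \<Rightarrow> real^'n) \<Rightarrow> real \<Rightarrow> real^'n" where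
  "compD Dop y t = (\<chi> i. Dop (\<lambda>s. y s $ i) t)"

end

theory Submission
  imports Defs
begin

text \<open>The residual r lies in V(m+1): D y and w lie in V(m), and A maps V(m) into V(m+1).
  The Galerkin condition kills its coordinates along the first d(m) basis vectors. Each
  remaining basis vector u(k) is orthogonal to V(m), so only the term -A y contributes to its
  coordinate; and as A maps V(m-1) into V(m), only the last block of coefficients of y survives.\<close>

lemma sum_drop_zero_prefix:
  fixes g :: "nat \<Rightarrow> 'a::comm_monoid_add"
  assumes "\<And>k. k \<in> {1..M} \<Longrightarrow> g k = 0"
  shows "sum g {1..N} = sum g {M<..N}"
  using assms by (intro sum.mono_neutral_right) auto

lemma subset_chain_le:
  assumes step: "\<And>i. a \<le> i \<Longrightarrow> i < b \<Longrightarrow> V i \<subseteq> V (Suc i)"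
    and "a \<le> i" "i \<le> j" "j \<le> b"
  shows "V i \<subseteq> V j"
  using \<open>i \<le> j\<close> \<open>j \<le> b\<close>
proof (induction j rule: dec_induct)
  case (step n)
  then show ?case using assms(1)[of n] \<open>a \<le> i\<close> by auto
qed simp

lemma lin_time_opD:
  assumes "lin_time_op T S Dop"
  shows "(\<lambda>t. 0) \<in> S"
    and "f \<in> S \<Longrightarrow> g \<in> S \<Longrightarrow> (\<lambda>t. f t + g t) \<in> S"
    and "f \<in> S \<Longrightarrow> (\<lambda>t. c * f t) \<in> S"
    and "f \<in> S \<Longrightarrow> g \<in> S \<Longrightarrow> t \<in> {0..T} \<Longrightarrow> Dop (\<lambda>s. f s + g s) t = Dop f t + Dop g t"
    and "f \<in> S \<Longrightarrow> t \<in> {0..T} \<Longrightarrow> Dop (\<lambda>s. c * f s) t = c * Dop f t"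
    and "(\<And>s. s \<in> {0..T} \<Longrightarrow> f s = g s) \<Longrightarrow> t \<in> {0..T} \<Longrightarrow> Dop f t = Dop g t"
  using assms unfolding lin_time_op_def by blast+

lemma lin_time_op_sum_mem:
  assumes D: "lin_time_op T S Dop" and "finite K" and "\<And>j. j \<in> K \<Longrightarrow> f j \<in> S"
  shows "(\<lambda>s. \<Sum>j\<in>K. c j * f j s) \<in> S"
  using \<open>finite K\<close> assms(3)
proof (induction K rule: finite_induct)
  case empty
  then show ?case using lin_time_opD(1)[OF D] by simp
next
  case (insert k K)
  have "(\<lambda>s. c k * f k s + (\<Sum>j\<in>K. c j * f j s)) \<in> S"
    using insert by (intro lin_time_opD(2,3)[OF D]) auto
  then show ?case using insert by simp
qed

lemma lin_time_op_sum:
  assumes D: "lin_time_op T S Dop" and "finite K" and "\<And>j. j \<in> K \<Longrightarrow> f j \<in> S"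
    and t: "t \<in> {0..T}"
  shows "Dop (\<lambda>s. \<Sum>j\<in>K. c j * f j s) t = (\<Sum>j\<in>K. c j * Dop (f j) t)"
  using \<open>finite K\<close> assms(3)
proof (induction K rule: finite_induct)
  case empty
  show ?case using lin_time_opD(5)[OF D lin_time_opD(1)[OF D] t, of 0] by simp
next
  case (insert k K)
  have fk: "f k \<in> S"
    using insert.prems by simp
  have sum_mem: "(\<lambda>s. \<Sum>j\<in>K. c j * f j s) \<in> S"
    using insert.prems by (intro lin_time_op_sum_mem[OF D insert.hyps(1)]) simp
  have "Dop (\<lambda>s. c k * f k s + (\<Sum>j\<in>K. c j * f j s)) t
      = Dop (\<lambda>s. c k * f k s) t + Dop (\<lambda>s. \<Sum>j\<in>K. c j * f j s) t"
    using lin_time_opD(4)[OF D lin_time_opD(3)[OF D fk] sum_mem t] .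
  also have "\<dots> = c k * Dop (f k) t + (\<Sum>j\<in>K. c j * Dop (f j) t)"
    using lin_time_opD(5)[OF D fk t] insert by simp
  finally show ?case using insert by simp
qed

lemma compD_sum:
  assumes D: "lin_time_op T S Dop" and "finite K" and "\<And>j. j \<in> K \<Longrightarrow> f j \<in> S"
    and t: "t \<in> {0..T}"
    and y: "\<And>s. s \<in> {0..T} \<Longrightarrow> y s = (\<Sum>j\<in>K. f j s *\<^sub>R v j)"
  shows "compD Dop y t = (\<Sum>j\<in>K. Dop (f j) t *\<^sub>R v j)"
  unfolding vec_eq_iff
proof
  fix i
  have "Dop (\<lambda>s. y s $ i) t = Dop (\<lambda>s. \<Sum>j\<in>K. v j $ i * f j s) t"
    by (rule lin_time_opD(6)[OF D _ t]) (simp add: y mult.commute)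
  also have "\<dots> = (\<Sum>j\<in>K. v j $ i * Dop (f j) t)"
    using lin_time_op_sum[OF assms(1-4)] .
  finally show "compD Dop y t $ i = (\<Sum>j\<in>K. Dop (f j) t *\<^sub>R v j) $ i"
    by (simp add: compD_def mult.commute)
qed

lemma compD_in_span:
  assumes "lin_time_op T S Dop" and "finite K" and "\<And>j. j \<in> K \<Longrightarrow> f j \<in> S"
    and "t \<in> {0..T}"
    and "\<And>s. s \<in> {0..T} \<Longrightarrow> y s = (\<Sum>j\<in>K. f j s *\<^sub>R v j)"
  shows "compD Dop y t \<in> span (v ` K)"
  using compD_sum[OF assms] by (simp add: span_sum span_scale span_base)

locale inner_product_subspace =
  fixes V :: "'a::real_vector set" and ip :: "'a \<Rightarrow> 'a \<Rightarrow> real"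
  assumes subspace: "subspace V" and inner_product: "inner_product_on V ip"
begin

lemma ip_commute: "x \<in> V \<Longrightarrow> y \<in> V \<Longrightarrow> ip x y = ip y x"
  using inner_product by (simp add: inner_product_on_def)

lemma ip_self_eq_0_iff: "x \<in> V \<Longrightarrow> ip x x = 0 \<longleftrightarrow> x = 0"
  using inner_product by (simp add: inner_product_on_def)

lemma ip_add_right: "a \<in> V \<Longrightarrow> x \<in> V \<Longrightarrow> y \<in> V \<Longrightarrow> ip a (x + y) = ip a x + ip a y"
  using inner_product subspace
  by (simp add: inner_product_on_def ip_commute subspace_add)

lemma ip_scaleR_right: "a \<in> V \<Longrightarrow> x \<in> V \<Longrightarrow> ip a (c *\<^sub>R x) = c * ip a x"
  using inner_product subspace
  by (simp add: inner_product_on_def ip_commute subspace_scale)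

lemma ip_zero_right: "a \<in> V \<Longrightarrow> ip a 0 = 0"
  using ip_scaleR_right[of a 0 0] subspace by (simp add: subspace_0)

lemma ip_minus_right: "a \<in> V \<Longrightarrow> x \<in> V \<Longrightarrow> ip a (- x) = - ip a x"
  using ip_scaleR_right[of a x "-1"] by simp

lemma ip_diff_right: "a \<in> V \<Longrightarrow> x \<in> V \<Longrightarrow> y \<in> V \<Longrightarrow> ip a (x - y) = ip a x - ip a y"
  using ip_add_right[of a x "- y"] ip_minus_right[of a y] subspace
  by (simp add: subspace_neg)

lemma ip_sum_right:
  assumes "a \<in> V" "\<And>k. k \<in> K \<Longrightarrow> f k \<in> V"
  shows "ip a (sum f K) = (\<Sum>k\<in>K. ip a (f k))"
  using assms(2)
proof (induction K rule: infinite_finite_induct)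
  case (insert k K)
  then show ?case using assms(1) subspace by (simp add: ip_add_right subspace_sum)
qed (simp_all add: ip_zero_right[OF assms(1)])

lemma ip_orthogonal_span:
  assumes a: "a \<in> V" and B: "B \<subseteq> V" and orth: "\<And>b. b \<in> B \<Longrightarrow> ip a b = 0"
    and v: "v \<in> span B"
  shows "ip a v = 0"
proof -
  have "subspace {v \<in> V. ip a v = 0}"
    using subspace a
    by (auto simp: subspace_def ip_add_right ip_scaleR_right ip_zero_right)
  then have "v \<in> {v \<in> V. ip a v = 0}"
    using span_induct[OF v] B orth by auto
  then show ?thesis by simp
qed

lemma orthonormal_expansion:
  assumes "finite I" and uV: "u ` I \<subseteq> V"
    and orth: "\<And>j k. j \<in> I \<Longrightarrow> k \<in> I \<Longrightarrow> ip (u j) (u k) = (if j = k then 1 else 0)"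
    and r: "r \<in> span (u ` I)"
  shows "r = (\<Sum>k\<in>I. ip (u k) r *\<^sub>R u k)"
proof -
  define e where "e = r - (\<Sum>k\<in>I. ip (u k) r *\<^sub>R u k)"
  have span_V: "span (u ` I) \<subseteq> V"
    using span_minimal[OF uV subspace] .
  have e_span: "e \<in> span (u ` I)"
    unfolding e_def by (intro span_diff[OF r] span_sum span_scale span_base) auto
  have r_V: "r \<in> V" and e_V: "e \<in> V"
    using r e_span span_V by auto
  have sum_V: "(\<Sum>k\<in>I. ip (u k) r *\<^sub>R u k) \<in> V"
    using uV by (intro subspace_sum[OF subspace] subspace_scale[OF subspace]) auto
  have e_orth: "ip e (u j) = 0" if j: "j \<in> I" for j
  proof -
    have uj: "u j \<in> V" using j uV by auto
    have "ip (u j) (\<Sum>k\<in>I. ip (u k) r *\<^sub>R u k) = (\<Sum>k\<in>I. ip (u j) (ip (u k) r *\<^sub>R u k))"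
      using uj uV by (intro ip_sum_right) (auto intro: subspace_scale[OF subspace])
    also have "\<dots> = (\<Sum>k\<in>I. ip (u k) r * ip (u j) (u k))"
      using uj uV by (intro sum.cong) (auto simp: ip_scaleR_right)
    also have "\<dots> = (\<Sum>k\<in>I. if k = j then ip (u k) r else 0)"
      using j orth by (intro sum.cong) auto
    also have "\<dots> = ip (u j) r"
      using j \<open>finite I\<close> by simp
    finally have "ip (u j) e = 0"
      unfolding e_def using ip_diff_right[OF uj r_V sum_V] by simp
    then show ?thesis
      using ip_commute[OF uj e_V] by simp
  qed
  have "ip e e = 0"
    using e_orth by (intro ip_orthogonal_span[OF e_V uV _ e_span]) auto
  then show ?thesis
    using ip_self_eq_0_iff[OF e_V] unfolding e_def by simp
qed

lemma orthonormal_orthogonal_span: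
  assumes uV: "u ` J \<subseteq> V"
    and orth: "\<And>j k. j \<in> J \<Longrightarrow> k \<in> J \<Longrightarrow> ip (u j) (u k) = (if j = k then 1 else 0)"
    and I: "I \<subseteq> J" and k: "k \<in> J - I" and v: "v \<in> span (u ` I)"
  shows "ip (u k) v = 0"
proof (rule ip_orthogonal_span[OF _ _ _ v])
  show "u k \<in> V" and "u ` I \<subseteq> V"
    using uV I k by auto
  show "\<And>b. b \<in> u ` I \<Longrightarrow> ip (u k) b = 0"
    using orth I k by auto
qed

lemma orthonormal_expansion_tail:
  fixes M N :: nat
  assumes uV: "u ` {1..N} \<subseteq> V"
    and orth: "\<And>j k. j \<in> {1..N} \<Longrightarrow> k \<in> {1..N} \<Longrightarrow> ip (u j) (u k) = (if j = k then 1 else 0)"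
    and r: "r \<in> span (u ` {1..N})"
    and head: "\<And>k. k \<in> {1..M} \<Longrightarrow> ip (u k) r = 0"
  shows "r = (\<Sum>k\<in>{M<..N}. ip (u k) r *\<^sub>R u k)"
proof -
  have "r = (\<Sum>k\<in>{1..N}. ip (u k) r *\<^sub>R u k)"
    using orthonormal_expansion[OF finite_atLeastAtMost uV orth r] .
  also have "\<dots> = (\<Sum>k\<in>{M<..N}. ip (u k) r *\<^sub>R u k)"
    using head by (intro sum_drop_zero_prefix) simp
  finally show ?thesis .
qed

lemma ip_sum_right_tail:
  fixes p q :: nat
  assumes a: "a \<in> V" and f: "\<And>j. j \<in> {1..q} \<Longrightarrow> f j \<in> V"
    and head: "\<And>j. j \<in> {1..p} \<Longrightarrow> ip a (f j) = 0"
  shows "ip a (\<Sum>j\<in>{1..q}. c j *\<^sub>R f j) = (\<Sum>j\<in>{p<..q}. ip a (f j) * c j)"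
proof -
  have "ip a (\<Sum>j\<in>{1..q}. c j *\<^sub>R f j) = (\<Sum>j\<in>{1..q}. ip a (c j *\<^sub>R f j))"
    using f by (intro ip_sum_right[OF a]) (auto intro: subspace_scale[OF subspace])
  also have "\<dots> = (\<Sum>j\<in>{1..q}. ip a (f j) * c j)"
    using f by (intro sum.cong) (auto simp: ip_scaleR_right[OF a])
  also have "\<dots> = (\<Sum>j\<in>{p<..q}. ip a (f j) * c j)"
    using head by (intro sum_drop_zero_prefix) simp
  finally show ?thesis .
qed

end

theorem theorem3p1:
  fixes A :: "real^'n^'n" and w :: "real^'n" and T :: real and m :: nat
    and Dop :: "(real \<Rightarrow> real) \<Rightarrow> (real \<Rightarrow> real)" and S :: "(real \<Rightarrow> real) set"
    and V :: "nat \<Rightarrow> (real^'n) set" and d :: "nat \<Rightarrow> nat"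
    and ip :: "real^'n \<Rightarrow> real^'n \<Rightarrow> real" and u :: "nat \<Rightarrow> real^'n"
    and y :: "real \<Rightarrow> real^'n" and x :: "nat \<Rightarrow> real \<Rightarrow> real"
  assumes T_pos: "T > 0"
    and m_pos: "m \<ge> 1"
    and D_op: "lin_time_op T S Dop"
    and V_sub: "\<And>i. 1 \<le> i \<Longrightarrow> i \<le> Suc m \<Longrightarrow> subspace (V i)"
    and V_nest: "\<And>i. 1 \<le> i \<Longrightarrow> i \<le> m \<Longrightarrow> V i \<subseteq> V (Suc i)"
    and d0: "d 0 = 0"
    and d_dim: "\<And>i. 1 \<le> i \<Longrightarrow> i \<le> Suc m \<Longrightarrow> d i = dim (V i)"
    and w_in: "w \<in> V 1"
    and A_V: "\<And>i. 1 \<le> i \<Longrightarrow> i \<le> m \<Longrightarrow> (\<lambda>v. A *v v) ` V i \<subseteq> V (Suc i)"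
    and ip_on: "inner_product_on (V (Suc m)) ip"
    and u_orth: "\<And>j k. j \<in> {1..d (Suc m)} \<Longrightarrow> k \<in> {1..d (Suc m)} \<Longrightarrow>
                   ip (u j) (u k) = (if j = k then 1 else 0)"
    and u_in: "\<And>i k. 1 \<le> i \<Longrightarrow> i \<le> Suc m \<Longrightarrow> k \<in> {1..d i} \<Longrightarrow> u k \<in> V i"
    and u_span: "\<And>i. 1 \<le> i \<Longrightarrow> i \<le> Suc m \<Longrightarrow> span (u ` {1..d i}) = V i"
    and y_in: "\<And>t. t \<in> {0..T} \<Longrightarrow> y t \<in> V m"
    and y_repr: "\<And>t. t \<in> {0..T} \<Longrightarrow> y t = (\<Sum>k\<in>{1..d m}. x k t *\<^sub>R u k)"
    and x_smooth: "\<And>k. k \<in> {1..d m} \<Longrightarrow> x k \<in> S"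
    and galerkin: "\<And>t v. t \<in> {0..T} \<Longrightarrow> v \<in> V m \<Longrightarrow>
                     ip v (- compD Dop y t - A *v y t + w) = 0"
  shows "\<forall>t\<in>{0..T}. - compD Dop y t - A *v y t + w =
           (\<Sum>k\<in>{d m <.. d (Suc m)}.
              (- (\<Sum>j\<in>{d (m - 1) <.. d m}. ip (u k) (A *v u j) * x j t)) *\<^sub>R u k)"
proof
  fix t assume t: "t \<in> {0..T}"
  interpret V: inner_product_subspace "V (Suc m)" ip
    using V_sub ip_on by unfold_locales auto
  have sN: "subspace (V (Suc m))" and Vm_sub: "V m \<subseteq> V (Suc m)"
    using V_sub V_nest m_pos by auto
  have u_N: "u ` {1..d (Suc m)} \<subseteq> V (Suc m)" and u_Vm: "\<And>j. j \<in> {1..d m} \<Longrightarrow> u j \<in> V m"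
    using u_in m_pos by auto
  have u_perp: "ip (u k) v = 0" if "k \<in> {d m<..d (Suc m)}" and "v \<in> V m" for k v
    using V.orthonormal_orthogonal_span[OF u_N u_orth, of "{1..d m}" k] that u_span[of m] m_pos
    by auto
  have Dy: "compD Dop y t \<in> V m"
    using compD_in_span[OF D_op finite_atLeastAtMost x_smooth t y_repr] u_span[of m] m_pos
    by simp
  have w: "w \<in> V m"
    using subset_chain_le[of 1 m V 1 m] V_nest m_pos w_in by auto
  have Ay: "A *v y t \<in> V (Suc m)"
    using A_V[of m] y_in[OF t] m_pos by auto
  have Au_head: "A *v u j \<in> V m" if "j \<in> {1..d (m - 1)}" for j
  proof -
    have "2 \<le> m" using that d0 m_pos by (cases "m = 1") auto
    then have "u j \<in> V (m - 1)" and "(\<lambda>v. A *v v) ` V (m - 1) \<subseteq> V m"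
      using A_V[of "m - 1"] u_in[of "m - 1" j] that by auto
    then show ?thesis by auto
  qed
  define r where "r = - compD Dop y t - A *v y t + w"
  have r: "r \<in> V (Suc m)"
    unfolding r_def using Dy w Vm_sub Ay
    by (intro subspace_add[OF sN] subspace_diff[OF sN] subspace_neg[OF sN]) auto
  have coeff: "ip (u k) r = - (\<Sum>j\<in>{d (m - 1)<..d m}. ip (u k) (A *v u j) * x j t)"
    if k: "k \<in> {d m<..d (Suc m)}" for k
  proof -
    have uk: "u k \<in> V (Suc m)" using u_N k by auto
    have "ip (u k) r = - ip (u k) (A *v y t)"
      unfolding r_def using uk Dy w Vm_sub Ay u_perp[OF k Dy] u_perp[OF k w]
      by (simp add: V.ip_add_right V.ip_diff_right V.ip_minus_right
          subspace_neg[OF sN] subspace_diff[OF sN] subset_iff)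
    also have "A *v y t = (\<Sum>j\<in>{1..d m}. x j t *\<^sub>R (A *v u j))"
      using y_repr[OF t] by (simp add: vec.sum matrix_vector_mult_scaleR)
    also have "ip (u k) \<dots> = (\<Sum>j\<in>{d (m - 1)<..d m}. ip (u k) (A *v u j) * x j t)"
      using A_V[of m] m_pos u_Vm u_perp[OF k Au_head]
      by (intro V.ip_sum_right_tail[OF uk]) auto
    finally show ?thesis .
  qed
  have "r = (\<Sum>k\<in>{d m<..d (Suc m)}. ip (u k) r *\<^sub>R u k)"
    using galerkin[OF t u_Vm] r u_span[of "Suc m"]
    by (intro V.orthonormal_expansion_tail[OF u_N u_orth]) (auto simp: r_def)
  also have "\<dots> = (\<Sum>k\<in>{d m<..d (Suc m)}.
      (- (\<Sum>j\<in>{d (m - 1)<..d m}. ip (u k) (A *v u j) * x j t)) *\<^sub>R u k)"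
    using coeff by (intro sum.cong) auto
  finally show "- compD Dop y t - A *v y t + w = \<dots>"
    unfolding r_def .
qed

end
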